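(* Let $K:[0,1]\times\mathbb{R}^n\to\mathbb{R}^n$ and $g:[0,1]\to\mathbb{R}^n$ be continuous, and let $X=C([0,1],\mathbb{R}^n)$ with the supremum norm $\|\cdot\|_\infty$. Let $f:[0,\infty)\to(0,\infty)$ be a Lebesgue integrable mapping which is summable (finite integral on each compact subset of $[0,\infty)$) and such that $\int_0^{\varepsilon} f(\lambda)\,d\lambda>0$ for each $\varepsilon>0$. Suppose there exist $\alpha\in(0,\tfrac12]$, $\psi\in\Psi$, $\varphi\in\Phi_u$ and $F\in\mathcal{C}$ such that for all $x,y\in X$ and $t\in[0,1]$, the inequality $\alpha\,\big|x(t)-g(t)-\int_0^t K(s,x(s))\,ds\big|\le |x(t)-y(t)|$ implies $$\psi\Big(\int_0^{|K(t,x(t))-K(t,y(t))|} f(\lambda)\,d\lambda\Big)\le F\Big(\psi\Big(\int_0^{|x(t)-y(t)|} f(\lambda)\,d\lambda\Big),\ \varphi\Big(\int_0^{|x(t)-y(t)|} f(\lambda)\,d\lambda\Big)\Big).$$ Then the integral equation $x(t)=g(t)+\int_0^t K(s,x(s))\,ds$, $t\in[0,1]$, has a unique solution $x\in X$.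
   Context: A $C$-class function is a continuous function $F:[0,\infty)^2\to\mathbb{R}$ such that for all $s,t\in[0,\infty)$: (1) $F(s,t)\le s$; (2) $F(s,t)=s$ implies $s=0$ or $t=0$. $\mathcal{C}$ denotes the class of all $C$-class functions. $\Phi_u$ denotes the class of functions $\varphi:[0,\infty)\to[0,\infty)$ that are continuous, satisfy $\varphi(t)>0$ for $t>0$, and $\varphi(0)\ge 0$. $\Psi$ denotes the set of functions $\psi:[0,\infty)\to[0,\infty)$ that are continuous and strictly increasing with $\psi(t)=0$ if and only if $t=0$. *)

theory Defs
  imports "HOL-Analysis.Analysis"
begin

definition C_class :: "(real \<Rightarrow> real \<Rightarrow> real) \<Rightarrow> bool" where
  "C_class F \<longleftrightarrow> continuous_on ({0..} \<times> {0..}) (\<lambda>(s,t). F s t) \<and>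
     (\<forall>s\<ge>0. \<forall>t\<ge>0. F s t \<le> s \<and> (F s t = s \<longrightarrow> s = 0 \<or> t = 0))"

definition Phi_u :: "(real \<Rightarrow> real) \<Rightarrow> bool" where
  "Phi_u \<phi> \<longleftrightarrow> continuous_on {0..} \<phi> \<and> (\<forall>t\<ge>0. \<phi> t \<ge> 0) \<and>
     (\<forall>t>0. \<phi> t > 0) \<and> \<phi> 0 \<ge> 0"

definition Psi :: "(real \<Rightarrow> real) \<Rightarrow> bool" where
  "Psi \<psi> \<longleftrightarrow> continuous_on {0..} \<psi> \<and> (\<forall>t\<ge>0. \<psi> t \<ge> 0) \<and>
     strict_mono_on {0..} \<psi> \<and> (\<forall>t\<ge>0. \<psi> t = 0 \<longleftrightarrow> t = 0)"

end

theory Submission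
  imports Defs
begin

(* Write T x t = g t + \<integral>\<^sub>0\<^sup>t K (s, x s) ds. Since \<psi> is strictly increasing, F (s, t) < s for
   s, t > 0, and r \<mapsto> \<integral>\<^sub>0\<^sup>r f is increasing and vanishes only at 0, the contractive condition
   yields |K (t, x t) - K (t, y t)| \<le> |x t - y t| whenever \<alpha> |x t - T x t| \<le> |x t - y t|. As \<alpha> \<le> 1,
   this applies to y = T x, and it applies trivially when x is a fixed point. Nonexpansiveness along
   Picard steps gives |T^(k+1) g - T^k g| (t) \<le> M t^k / k!, so the iterates converge uniformly to a
   fixed point; for two fixed points, E = |x - y| satisfies E t \<le> \<integral>\<^sub>0\<^sup>t E, hence E = 0. *)

lemma integral_monomial_over_fact:
  assumes "0 \<le> t"
  shows "integral {0..t} (\<lambda>s::real. M * s^k / fact k) = M * t^Suc k / fact (Suc k)"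
proof -
  have "((\<lambda>s::real. M * s^k / fact k) has_integral
          (M * t^Suc k / fact (Suc k) - M * 0^Suc k / fact (Suc k))) {0..t}"
  proof (rule fundamental_theorem_of_calculus[OF assms])
    fix x :: real
    have "((\<lambda>s. M * s^Suc k / fact (Suc k)) has_real_derivative
            M * (real (Suc k) * x^k) / fact (Suc k)) (at x within {0..t})"
      using DERIV_cdivide[OF DERIV_cmult[OF DERIV_pow[of "Suc k" x "{0..t}"]], of M "fact (Suc k)"]
      by simp
    moreover have "M * (real (Suc k) * x^k) / fact (Suc k) = M * x^k / fact k"
      by (simp add: fact_Suc field_simps del: of_nat_Suc)
    ultimately show "((\<lambda>s. M * s^Suc k / fact (Suc k)) has_vector_derivative M * x^k / fact k)
                       (at x within {0..t})"
      by (simp add: has_real_derivative_iff_has_vector_derivative[symmetric])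
  qed
  then have "((\<lambda>s::real. M * s^k / fact k) has_integral M * t^Suc k / fact (Suc k)) {0..t}"
    by simp
  then show ?thesis
    by (rule integral_unique)
qed

lemma iterated_integral_bound:
  fixes D :: "nat \<Rightarrow> real \<Rightarrow> real"
  assumes cont: "\<And>k. continuous_on {0..b} (D k)"
    and base: "\<And>t. t \<in> {0..b} \<Longrightarrow> D 0 t \<le> M"
    and step: "\<And>k t. t \<in> {0..b} \<Longrightarrow> D (Suc k) t \<le> integral {0..t} (D k)"
    and t: "t \<in> {0..b}"
  shows "D k t \<le> M * t^k / fact k"
  using t
proof (induction k arbitrary: t)
  case 0
  then show ?case using base by simp
next
  case (Suc k)
  then have sub: "{0..t} \<subseteq> {0..b}" by auto
  have "D (Suc k) t \<le> integral {0..t} (D k)"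
    using step Suc.prems .
  also have "\<dots> \<le> integral {0..t} (\<lambda>s. M * s^k / fact k)"
  proof (rule integral_le)
    show "D k integrable_on {0..t}"
      by (intro integrable_continuous_real continuous_on_subset[OF cont sub])
    show "(\<lambda>s. M * s^k / fact k) integrable_on {0..t}"
      by (intro integrable_continuous_real continuous_intros) simp
    show "D k s \<le> M * s^k / fact k" if "s \<in> {0..t}" for s
      using that sub Suc.IH by auto
  qed
  also have "\<dots> = M * t^Suc k / fact (Suc k)"
    using Suc.prems integral_monomial_over_fact by auto
  finally show ?case .
qed

lemma le_integral_self_imp_nonpos:
  fixes E :: "real \<Rightarrow> real"
  assumes cont: "continuous_on {0..b} E"
    and le: "\<And>t. t \<in> {0..b} \<Longrightarrow> E t \<le> integral {0..t} E"
    and t: "t \<in> {0..b}"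
  shows "E t \<le> 0"
proof -
  obtain N where N: "\<And>t. t \<in> {0..b} \<Longrightarrow> norm (E t) \<le> N"
    using continuous_on_compact_bound[OF compact_Icc cont] by metis
  have "E t \<le> N" if "t \<in> {0..b}" for t
    using N[OF that] by (simp add: abs_le_iff)
  then have bound: "E t \<le> N * t^k / fact k" for k
    using iterated_integral_bound[where D="\<lambda>_. E" and M=N] cont le t by blast
  have "(\<lambda>k. N * (inverse (fact k) * t^k)) \<longlonglongrightarrow> N * 0"
    by (intro tendsto_mult tendsto_const summable_LIMSEQ_zero[OF summable_exp])
  then have "(\<lambda>k. N * t^k / fact k) \<longlonglongrightarrow> 0"
    by (simp add: field_simps)
  then show ?thesis
    by (rule LIMSEQ_le_const) (use bound in auto)
qed

lemma uniform_limit_of_summable_increments: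
  fixes xs :: "nat \<Rightarrow> 'b \<Rightarrow> 'a::banach"
  assumes "summable c" and "\<And>k t. t \<in> S \<Longrightarrow> norm (xs (Suc k) t - xs k t) \<le> c k"
  shows "uniform_limit S xs (\<lambda>t. xs 0 t + (\<Sum>i. xs (Suc i) t - xs i t)) sequentially"
proof -
  have "uniform_limit S (\<lambda>n t. xs 0 t + (\<Sum>i<n. xs (Suc i) t - xs i t))
          (\<lambda>t. xs 0 t + (\<Sum>i. xs (Suc i) t - xs i t)) sequentially"
    by (intro uniform_limit_add uniform_limit_const Weierstrass_m_test[OF _ assms(1)] assms(2))
  moreover have "(\<Sum>i<n. xs (Suc i) t - xs i t) = xs n t - xs 0 t" for n t
    by (rule sum_lessThan_telescope)
  ultimately show ?thesis
    by simp
qed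

lemma norm_le_of_summable_increments:
  fixes xs :: "nat \<Rightarrow> 'a::real_normed_vector"
  assumes "summable c" and "\<And>k. norm (xs (Suc k) - xs k) \<le> c k"
  shows "norm (xs k) \<le> norm (xs 0) + (\<Sum>i. c i)"
proof -
  have "norm (xs k) = norm (xs 0 + (\<Sum>i<k. xs (Suc i) - xs i))"
    by (simp add: sum_lessThan_telescope)
  also have "\<dots> \<le> norm (xs 0) + (\<Sum>i<k. norm (xs (Suc i) - xs i))"
    by (rule order_trans[OF norm_triangle_ineq]) (simp add: norm_sum)
  also have "(\<Sum>i<k. norm (xs (Suc i) - xs i)) \<le> (\<Sum>i<k. c i)"
    by (intro sum_mono assms(2))
  also have "(\<Sum>i<k. c i) \<le> (\<Sum>i. c i)"
    by (rule sum_le_suminf[OF assms(1)]) (auto intro: order_trans[OF norm_ge_zero assms(2)])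
  finally show ?thesis by simp
qed

lemma C_class_Psi_Phi_u_bound:
  assumes \<psi>: "Psi \<psi>" and \<phi>: "Phi_u \<phi>" and F: "C_class F" and "0 \<le> u" "0 \<le> v"
    and le: "\<psi> u \<le> F (\<psi> v) (\<phi> v)"
  shows "u < v \<or> u = 0"
proof (cases "v = 0")
  case True
  then have "\<psi> v = 0" "\<phi> v \<ge> 0"
    using \<psi> \<phi> by (simp_all add: Psi_def Phi_u_def)
  then have "F (\<psi> v) (\<phi> v) \<le> 0"
    using F by (simp add: C_class_def)
  moreover have "\<psi> u \<ge> 0"
    using \<psi> \<open>0 \<le> u\<close> by (simp add: Psi_def)
  ultimately have "\<psi> u = 0"
    using le by linarith
  then show ?thesis
    using \<psi> \<open>0 \<le> u\<close> by (simp add: Psi_def)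
next
  case False
  then have "\<psi> v > 0" "\<phi> v > 0"
    using \<psi> \<phi> \<open>0 \<le> v\<close> by (auto simp: Psi_def Phi_u_def order_le_less)
  then have "F (\<psi> v) (\<phi> v) < \<psi> v"
    using F by (auto simp: C_class_def order_le_less)
  with le have "\<psi> u < \<psi> v" by linarith
  moreover have "strict_mono_on {0..} \<psi>"
    using \<psi> by (simp add: Psi_def)
  ultimately show ?thesis
    using strict_mono_on_less \<open>0 \<le> u\<close> \<open>0 \<le> v\<close> by fastforce
qed

lemma le_if_Psi_integral_le_C_class:
  fixes f :: "real \<Rightarrow> real"
  assumes f_pos: "\<forall>r\<ge>0. f r > 0" and f_int: "\<forall>b\<ge>0. f integrable_on {0..b}"
    and f_eps: "\<forall>\<epsilon>>0. integral {0..\<epsilon>} f > 0"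
    and \<psi>: "Psi \<psi>" and \<phi>: "Phi_u \<phi>" and F: "C_class F" and "0 \<le> a" "0 \<le> b"
    and le: "\<psi> (integral {0..a} f) \<le> F (\<psi> (integral {0..b} f)) (\<phi> (integral {0..b} f))"
  shows "a \<le> b"
proof -
  have mono: "integral {0..c} f \<le> integral {0..d} f" if "0 \<le> c" "c \<le> d" for c d
    by (rule integral_subset_le) (use that f_int f_pos in \<open>auto intro: less_imp_le\<close>)
  have "integral {0..a} f < integral {0..b} f \<or> integral {0..a} f = 0"
    using mono[of 0 a] mono[of 0 b] \<open>0 \<le> a\<close> \<open>0 \<le> b\<close>
    by (intro C_class_Psi_Phi_u_bound[OF \<psi> \<phi> F _ _ le]) auto
  then show ?thesis
  proof
    assume "integral {0..a} f < integral {0..b} f"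
    then show ?thesis
      using mono[of b a] \<open>0 \<le> b\<close> by linarith
  next
    assume "integral {0..a} f = 0"
    then have "\<not> 0 < a"
      using f_eps by (metis less_irrefl)
    then show ?thesis
      using \<open>0 \<le> b\<close> by simp
  qed
qed

locale volterra_equation =
  fixes K :: "real \<Rightarrow> 'a::euclidean_space \<Rightarrow> 'a" and g :: "real \<Rightarrow> 'a" and b :: real
  assumes K_cont: "continuous_on ({0..b} \<times> UNIV) (\<lambda>(t, u). K t u)"
    and g_cont: "continuous_on {0..b} g"
begin

definition volterra :: "(real \<Rightarrow> 'a) \<Rightarrow> real \<Rightarrow> 'a" where
  "volterra x t = g t + integral {0..t} (\<lambda>s. K s (x s))"

lemma continuous_on_K_comp:
  assumes "continuous_on {0..b} x"
  shows "continuous_on {0..b} (\<lambda>s. K s (x s))"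
proof -
  have "continuous_on {0..b} (\<lambda>s. (\<lambda>(t, u). K t u) (s, x s))"
    by (rule continuous_on_compose2[OF K_cont]) (auto intro!: continuous_intros assms)
  then show ?thesis by simp
qed

lemma integrable_K_comp:
  assumes "continuous_on {0..b} x" and "t \<le> b"
  shows "(\<lambda>s. K s (x s)) integrable_on {0..t}"
  using assms by (intro integrable_continuous_real continuous_on_subset[OF continuous_on_K_comp]) auto

lemma continuous_on_volterra:
  assumes "continuous_on {0..b} x"
  shows "continuous_on {0..b} (volterra x)"
  unfolding volterra_def using continuous_on_K_comp[OF assms] g_cont
  by (auto intro!: continuous_intros indefinite_integral_continuous_1 integrable_continuous_real)

lemma norm_volterra_diff_le:
  assumes x: "continuous_on {0..b} x" and y: "continuous_on {0..b} y" and "t \<le> b"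
    and lip: "\<And>s. s \<in> {0..t} \<Longrightarrow> norm (K s (x s) - K s (y s)) \<le> norm (x s - y s)"
  shows "norm (volterra x t - volterra y t) \<le> integral {0..t} (\<lambda>s. norm (x s - y s))"
proof -
  note ix = integrable_K_comp[OF x \<open>t \<le> b\<close>] and iy = integrable_K_comp[OF y \<open>t \<le> b\<close>]
  have "volterra x t - volterra y t = integral {0..t} (\<lambda>s. K s (x s) - K s (y s))"
    unfolding volterra_def by (simp add: integral_diff[OF ix iy])
  also have "norm \<dots> \<le> integral {0..t} (\<lambda>s. norm (x s - y s))"
  proof (rule integral_norm_bound_integral[OF integrable_diff[OF ix iy] _ lip])
    have "continuous_on {0..b} (\<lambda>s. norm (x s - y s))"
      using x y by (intro continuous_intros)
    then show "(\<lambda>s. norm (x s - y s)) integrable_on {0..t}"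
      by (rule integrable_continuous_real[OF continuous_on_subset]) (use \<open>t \<le> b\<close> in auto)
  qed
  finally show ?thesis .
qed

lemma tendsto_volterra:
  assumes cont: "\<And>k. continuous_on {0..b} (xs k)"
    and bounded: "\<And>k s. s \<in> {0..b} \<Longrightarrow> norm (xs k s) \<le> R"
    and conv: "\<And>s. s \<in> {0..b} \<Longrightarrow> (\<lambda>k. xs k s) \<longlonglongrightarrow> x s"
    and "t \<le> b"
  shows "(\<lambda>k. volterra (xs k) t) \<longlonglongrightarrow> volterra x t"
proof -
  have sub: "{0..t} \<subseteq> {0..b}" using \<open>t \<le> b\<close> by auto
  obtain B where B: "\<And>p. p \<in> {0..b} \<times> cball 0 R \<Longrightarrow> norm ((\<lambda>(t, u). K t u) p) \<le> B"
    using continuous_on_compact_bound[OF compact_Times[OF compact_Icc compact_cball]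
        continuous_on_subset[OF K_cont]] by blast
  have "(\<lambda>k. integral {0..t} (\<lambda>s. K s (xs k s))) \<longlonglongrightarrow> integral {0..t} (\<lambda>s. K s (x s))"
  proof (rule dominated_convergence(2))
    show "(\<lambda>s. K s (xs k s)) integrable_on {0..t}" for k
      by (rule integrable_K_comp[OF cont \<open>t \<le> b\<close>])
    show "(\<lambda>s. B) integrable_on {0..t}"
      by (rule integrable_const_ivl)
    show "norm (K s (xs k s)) \<le> B" if "s \<in> {0..t}" for k s
      using B[of "(s, xs k s)"] bounded[of s k] that sub by auto
    show "(\<lambda>k. K s (xs k s)) \<longlonglongrightarrow> K s (x s)" if "s \<in> {0..t}" for s
    proof -
      have "((\<lambda>k. (\<lambda>(t, u). K t u) (s, xs k s)) \<longlongrightarrow> (\<lambda>(t, u). K t u) (s, x s)) sequentially"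
        by (rule continuous_on_tendsto_compose[OF K_cont])
           (use that sub conv in \<open>auto intro!: tendsto_Pair\<close>)
      then show ?thesis by simp
    qed
  qed
  then show ?thesis
    unfolding volterra_def by (intro tendsto_add tendsto_const)
qed

lemma volterra_iterate_increment_bound:
  assumes step_lip: "\<And>x s. continuous_on {0..b} x \<Longrightarrow> s \<in> {0..b} \<Longrightarrow>
      norm (K s (x s) - K s (volterra x s)) \<le> norm (x s - volterra x s)"
  obtains M where "\<And>k t. t \<in> {0..b} \<Longrightarrow>
      norm ((volterra ^^ Suc k) g t - (volterra ^^ k) g t) \<le> M * b^k / fact k"
proof -
  define xs where "xs k = (volterra ^^ k) g" for k
  have xs_Suc: "xs (Suc k) = volterra (xs k)" for k
    by (simp add: xs_def)
  have xs_cont: "continuous_on {0..b} (xs k)" for k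
    by (induction k) (simp_all add: xs_def g_cont continuous_on_volterra)
  define D where "D k t = norm (xs (Suc k) t - xs k t)" for k t
  have D_cont: "continuous_on {0..b} (D k)" for k
    unfolding D_def using xs_cont by (intro continuous_intros)
  obtain M where M: "M \<ge> 0" "\<And>t. t \<in> {0..b} \<Longrightarrow> norm (D 0 t) \<le> M"
    using continuous_on_compact_bound[OF compact_Icc D_cont[of 0]] by blast
  have D_0: "D 0 t \<le> M" if "t \<in> {0..b}" for t
    using M(2)[OF that] by (simp add: D_def)
  have D_step: "D (Suc k) t \<le> integral {0..t} (D k)" if "t \<in> {0..b}" for k t
  proof -
    have lip: "norm (K s (xs (Suc k) s) - K s (xs k s)) \<le> norm (xs (Suc k) s - xs k s)"
      if "s \<in> {0..b}" for s
      using step_lip[OF xs_cont that, of k] by (simp add: xs_Suc norm_minus_commute)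
    have "D (Suc k) t = norm (volterra (xs (Suc k)) t - volterra (xs k) t)"
      by (simp add: D_def xs_Suc)
    also have "\<dots> \<le> integral {0..t} (D k)"
      unfolding D_def using \<open>t \<in> {0..b}\<close> lip
      by (intro norm_volterra_diff_le[OF xs_cont xs_cont]) auto
    finally show ?thesis .
  qed
  have D_le: "D k t \<le> M * b^k / fact k" if "t \<in> {0..b}" for k t
  proof -
    have "D k t \<le> M * t^k / fact k"
      using iterated_integral_bound[OF D_cont D_0 D_step that] .
    also have "\<dots> \<le> M * b^k / fact k"
      using that M(1) by (auto intro!: divide_right_mono mult_left_mono power_mono)
    finally show ?thesis .
  qed
  show ?thesis
    by (rule that) (use D_le in \<open>simp add: D_def xs_def\<close>)
qed

lemma volterra_fixed_point_exists:
  assumes step_lip: "\<And>x s. continuous_on {0..b} x \<Longrightarrow> s \<in> {0..b} \<Longrightarrow>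
      norm (K s (x s) - K s (volterra x s)) \<le> norm (x s - volterra x s)"
  shows "\<exists>x. continuous_on {0..b} x \<and> (\<forall>t\<in>{0..b}. volterra x t = x t)"
proof -
  define xs where "xs k = (volterra ^^ k) g" for k
  have xs_cont: "continuous_on {0..b} (xs k)" for k
    by (induction k) (simp_all add: xs_def g_cont continuous_on_volterra)
  obtain M where M: "\<And>k t. t \<in> {0..b} \<Longrightarrow> norm (xs (Suc k) t - xs k t) \<le> M * b^k / fact k"
    using volterra_iterate_increment_bound[OF step_lip] unfolding xs_def by blast
  have summable: "summable (\<lambda>k. M * b^k / fact k)"
    using summable_mult[OF summable_exp[of b], of M] by (simp add: divide_inverse mult_ac)
  define x where "x t = xs 0 t + (\<Sum>i. xs (Suc i) t - xs i t)" for t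
  have ul: "uniform_limit {0..b} xs x sequentially"
    unfolding x_def[abs_def] by (rule uniform_limit_of_summable_increments[OF summable M])
  have x_cont: "continuous_on {0..b} x"
    by (rule uniform_limit_theorem[OF always_eventually ul]) (simp_all add: xs_cont)
  have conv: "(\<lambda>k. xs k t) \<longlonglongrightarrow> x t" if "t \<in> {0..b}" for t
    by (rule tendsto_uniform_limitI[OF ul that])
  obtain B where B: "\<And>t. t \<in> {0..b} \<Longrightarrow> norm (xs 0 t) \<le> B"
    using continuous_on_compact_bound[OF compact_Icc xs_cont] by metis
  have bounded: "norm (xs k t) \<le> B + (\<Sum>i. M * b^i / fact i)" if "t \<in> {0..b}" for k t
    using norm_le_of_summable_increments[OF summable M[OF that], of k] B[OF that] by linarith
  have "volterra x t = x t" if "t \<in> {0..b}" for t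
  proof (rule LIMSEQ_unique)
    show "(\<lambda>k. xs (Suc k) t) \<longlonglongrightarrow> volterra x t"
      using tendsto_volterra[OF xs_cont bounded conv] that by (simp add: xs_def)
    show "(\<lambda>k. xs (Suc k) t) \<longlonglongrightarrow> x t"
      using conv[OF that] by (rule LIMSEQ_Suc)
  qed
  with x_cont show ?thesis by blast
qed

lemma volterra_fixed_point_unique:
  assumes y: "continuous_on {0..b} y" and z: "continuous_on {0..b} z"
    and y_fix: "\<forall>t\<in>{0..b}. volterra y t = y t" and z_fix: "\<forall>t\<in>{0..b}. volterra z t = z t"
    and lip: "\<And>s. s \<in> {0..b} \<Longrightarrow> norm (K s (y s) - K s (z s)) \<le> norm (y s - z s)"
    and "t \<in> {0..b}"
  shows "y t = z t"
proof -
  have "norm (y t - z t) \<le> 0"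
  proof (rule le_integral_self_imp_nonpos[OF _ _ \<open>t \<in> {0..b}\<close>])
    show "continuous_on {0..b} (\<lambda>t. norm (y t - z t))"
      using y z by (intro continuous_intros)
    show "norm (y t - z t) \<le> integral {0..t} (\<lambda>t. norm (y t - z t))" if "t \<in> {0..b}" for t
    proof -
      have "norm (y t - z t) = norm (volterra y t - volterra z t)"
        using y_fix z_fix that by simp
      also have "\<dots> \<le> integral {0..t} (\<lambda>t. norm (y t - z t))"
        using that lip by (intro norm_volterra_diff_le[OF y z]) auto
      finally show ?thesis .
    qed
  qed
  then show ?thesis by simp
qed

lemma volterra_unique_fixed_point:
  fixes \<alpha> :: real
  assumes "\<alpha> \<le> 1"
    and lip: "\<And>x y t. continuous_on {0..b} x \<Longrightarrow> continuous_on {0..b} y \<Longrightarrow> t \<in> {0..b} \<Longrightarrow>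
      \<alpha> * norm (x t - volterra x t) \<le> norm (x t - y t) \<Longrightarrow>
      norm (K t (x t) - K t (y t)) \<le> norm (x t - y t)"
  shows "\<exists>x. continuous_on {0..b} x \<and> (\<forall>t\<in>{0..b}. volterra x t = x t) \<and>
    (\<forall>y. continuous_on {0..b} y \<and> (\<forall>t\<in>{0..b}. volterra y t = y t) \<longrightarrow> (\<forall>t\<in>{0..b}. y t = x t))"
proof -
  have "\<exists>x. continuous_on {0..b} x \<and> (\<forall>t\<in>{0..b}. volterra x t = x t)"
  proof (rule volterra_fixed_point_exists)
    fix x :: "real \<Rightarrow> 'a" and s :: real
    assume x: "continuous_on {0..b} x" and s: "s \<in> {0..b}"
    have "\<alpha> * norm (x s - volterra x s) \<le> norm (x s - volterra x s)"
      using \<open>\<alpha> \<le> 1\<close> by (simp add: mult_le_cancel_right2)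
    then show "norm (K s (x s) - K s (volterra x s)) \<le> norm (x s - volterra x s)"
      by (rule lip[OF x continuous_on_volterra[OF x] s])
  qed
  then obtain x where x: "continuous_on {0..b} x" "\<forall>t\<in>{0..b}. volterra x t = x t"
    by blast
  have "y t = x t"
    if y: "continuous_on {0..b} y" and y_fix: "\<forall>t\<in>{0..b}. volterra y t = y t"
      and t: "t \<in> {0..b}" for y t
  proof (rule volterra_fixed_point_unique[OF y x(1) y_fix x(2) _ t])
    fix s :: real
    assume s: "s \<in> {0..b}"
    show "norm (K s (y s) - K s (x s)) \<le> norm (y s - x s)"
      using y_fix s by (intro lip[OF y x(1) s]) simp
  qed
  with x show ?thesis
    by blast
qed

end

theorem theorem4p6:
  fixes K :: "real \<Rightarrow> real ^ 'n \<Rightarrow> real ^ 'n"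
    and g :: "real \<Rightarrow> real ^ 'n"
    and f :: "real \<Rightarrow> real"
    and \<alpha> :: real
    and \<psi> \<phi> :: "real \<Rightarrow> real"
    and F :: "real \<Rightarrow> real \<Rightarrow> real"
  assumes K_cont: "continuous_on ({0..1} \<times> UNIV) (\<lambda>(t, u). K t u)"
    and g_cont: "continuous_on {0..1} g"
    and f_pos: "\<forall>r\<ge>0. f r > 0"
    and f_int: "\<forall>b\<ge>0. f integrable_on {0..b}"
    and f_eps: "\<forall>\<epsilon>>0. integral {0..\<epsilon>} f > 0"
    and \<alpha>: "0 < \<alpha>" "\<alpha> \<le> 1/2"
    and \<psi>: "Psi \<psi>" and \<phi>: "Phi_u \<phi>" and F: "C_class F"
    and contr: "\<forall>x y. continuous_on {0..1} x \<longrightarrow> continuous_on {0..1} y \<longrightarrow>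
        (\<forall>t\<in>{0..1}.
          \<alpha> * norm (x t - g t - integral {0..t} (\<lambda>s. K s (x s))) \<le> norm (x t - y t) \<longrightarrow>
          \<psi> (integral {0..norm (K t (x t) - K t (y t))} f)
            \<le> F (\<psi> (integral {0..norm (x t - y t)} f)) (\<phi> (integral {0..norm (x t - y t)} f)))"
  shows "\<exists>x. continuous_on {0..1} x \<and>
           (\<forall>t\<in>{0..1}. x t = g t + integral {0..t} (\<lambda>s. K s (x s))) \<and>
           (\<forall>y. continuous_on {0..1} y \<and>
                (\<forall>t\<in>{0..1}. y t = g t + integral {0..t} (\<lambda>s. K s (y s)))
                \<longrightarrow> (\<forall>t\<in>{0..1}. y t = x t))"
proof -
  interpret volterra_equation K g 1
    using K_cont g_cont by unfold_locales
  have nonexpansive: "norm (K t (x t) - K t (y t)) \<le> norm (x t - y t)"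
    if x: "continuous_on {0..1} x" and y: "continuous_on {0..1} y" and t: "t \<in> {0..1}"
      and near: "\<alpha> * norm (x t - volterra x t) \<le> norm (x t - y t)" for x y t
  proof (rule le_if_Psi_integral_le_C_class[OF f_pos f_int f_eps \<psi> \<phi> F norm_ge_zero norm_ge_zero])
    have "\<alpha> * norm (x t - g t - integral {0..t} (\<lambda>s. K s (x s))) \<le> norm (x t - y t)"
      using near by (simp add: volterra_def diff_diff_eq)
    then show "\<psi> (integral {0..norm (K t (x t) - K t (y t))} f)
            \<le> F (\<psi> (integral {0..norm (x t - y t)} f)) (\<phi> (integral {0..norm (x t - y t)} f))"
      using contr x y t by blast
  qed
  have solution: "\<exists>x. continuous_on {0..1} x \<and> (\<forall>t\<in>{0..1}. volterra x t = x t) \<and>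
    (\<forall>y. continuous_on {0..1} y \<and> (\<forall>t\<in>{0..1}. volterra y t = y t) \<longrightarrow> (\<forall>t\<in>{0..1}. y t = x t))"
  proof (rule volterra_unique_fixed_point)
    show "\<alpha> \<le> 1"
      using \<alpha>(2) by simp
  qed (fact nonexpansive)
  have fixed_iff: "(\<forall>t\<in>{0..1}. volterra y t = y t) \<longleftrightarrow>
      (\<forall>t\<in>{0..1}. y t = g t + integral {0..t} (\<lambda>s. K s (y s)))" for y
    unfolding volterra_def by (metis (no_types, lifting))
  show ?thesis
    using solution unfolding fixed_iff .
qed

end
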